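(* Let $(\pi_r)_{r\in\mathbb{N}}$ be periods and let $(k_t)_{t\in\mathbb{N}}$ be the multiperiodic sequence with periods $(\pi_r)$ and seeds $\sigma_r=1$ for all $r\in\mathbb{N}$. Let $w_r:=\inf\{t\in\mathbb{N}: k_t=r\}$. If $r\in\mathbb{N}$ is such that $\pi_i\ge 2$ for all $1\le i\le r-1$, then $$w_r=\left\lceil\cdots\left\lceil\left\lceil\frac{\pi_{r-1}}{\pi_{r-1}-1}\right\rceil\frac{\pi_{r-2}}{\pi_{r-2}-1}\right\rceil\cdots\frac{\pi_1}{\pi_1-1}\right\rceil,$$ i.e. $w_r=u_1$ where $u_r:=1$ and $u_{i}:=\lceil u_{i+1}\,\pi_{i}/(\pi_{i}-1)\rceil$ for $i=r-1,r-2,\dots,1$ (so $w_1=1$).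
   Context: $\mathbb{N}=\{1,2,3,\dots\}$. Multiperiodic sequence: given periods $\pi_r\in\mathbb{N}$ and seeds $\sigma_r\in\{1,\dots,\pi_r\}$, the sequence $(k_t)_{t\in\mathbb{N}}$ with values in $\mathbb{N}\cup\{\infty\}$ is defined by requiring, for each $r$, that the subsequence $(k^{(r)}_t)_{t\in\mathbb{N}}$ obtained by deleting all tokens $k_t<r$ satisfies $k^{(r)}_t=r\iff t\equiv\sigma_r\pmod{\pi_r}$; entries left undefined for all $r$ are set to $\infty$. Equivalently: clocks $\phi_r$ start at $\sigma_r$; for each token, scan $r=1,2,\dots$, decrementing each clock with $\phi_r>1$, until the first $r$ with $\phi_r=1$, output $k_t=r$ and reset $\phi_r=\pi_r$. *)

theory Defs
  imports Complex_Main "HOL-Library.Extended_Nat"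
begin

text \<open>Index conventions: periods \<pi> r, seeds \<sigma> r and clocks \<phi> r are meaningful for r \<ge> 1;
  tokens k t are meaningful for t \<ge> 1. Token values live in enat (\<infinity> = infinity).\<close>

definition first_ready :: "(nat \<Rightarrow> nat) \<Rightarrow> enat" where
  "first_ready \<phi> = (if \<exists>r\<ge>1. \<phi> r = 1 then enat (LEAST r. 1 \<le> r \<and> \<phi> r = 1) else \<infinity>)"

definition clock_step :: "(nat \<Rightarrow> nat) \<Rightarrow> (nat \<Rightarrow> nat) \<Rightarrow> (nat \<Rightarrow> nat)" where
  "clock_step \<pi> \<phi> = (\<lambda>r. if 1 \<le> r \<and> enat r < first_ready \<phi> then \<phi> r - 1
                          else if enat r = first_ready \<phi> then \<pi> r else \<phi> r)"

text \<open>Clock state before token number n+1.\<close>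
primrec clocks :: "(nat \<Rightarrow> nat) \<Rightarrow> (nat \<Rightarrow> nat) \<Rightarrow> nat \<Rightarrow> (nat \<Rightarrow> nat)" where
  "clocks \<pi> \<sigma> 0 = \<sigma>"
| "clocks \<pi> \<sigma> (Suc n) = clock_step \<pi> (clocks \<pi> \<sigma> n)"

definition mp_seq :: "(nat \<Rightarrow> nat) \<Rightarrow> (nat \<Rightarrow> nat) \<Rightarrow> nat \<Rightarrow> enat" where
  "mp_seq \<pi> \<sigma> t = first_ready (clocks \<pi> \<sigma> (t - 1))"

definition first_hit :: "(nat \<Rightarrow> enat) \<Rightarrow> nat \<Rightarrow> enat" where
  "first_hit k r = (INF t \<in> {t. 1 \<le> t \<and> k t = enat r}. enat t)"

text \<open>u_aux \<pi> r j = u_{r-j}, where u_r = 1 and u_i = ceil(u_{i+1} \<pi>_i / (\<pi>_i - 1)).\<close>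
primrec u_aux :: "(nat \<Rightarrow> nat) \<Rightarrow> nat \<Rightarrow> nat \<Rightarrow> nat" where
  "u_aux \<pi> r 0 = 1"
| "u_aux \<pi> r (Suc j) = nat \<lceil>real (u_aux \<pi> r j) * real (\<pi> (r - 1 - j)) / (real (\<pi> (r - 1 - j)) - 1)\<rceil>"

definition u_chain :: "(nat \<Rightarrow> nat) \<Rightarrow> nat \<Rightarrow> nat" where
  "u_chain \<pi> r = u_aux \<pi> r (r - 1)"

end

theory Submission
  imports Defs
begin

text \<open>Clock 1 has seed 1 and period \<open>p = \<pi> 1 \<ge> 2\<close>; it is scanned first, so it fires exactly at the
  tokens \<open>t \<equiv> 1 (mod p)\<close>, independently of all other clocks. Deleting these tokens and lowering
  the remaining ones by 1 leaves the multiperiodic sequence with periods \<open>\<pi> 2, \<pi> 3, \<dots>\<close> and again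
  all seeds 1, and \<open>\<lfloor>t (p - 1) / p\<rfloor>\<close> of the first \<open>t\<close> tokens survive. So if \<open>r\<close> first occurs at
  position \<open>m\<close> of the shifted sequence, then \<open>r + 1\<close> first occurs at the least \<open>t\<close> with
  \<open>\<lfloor>t (p - 1) / p\<rfloor> \<ge> m\<close>, which is \<open>\<lceil>m p / (p - 1)\<rceil>\<close>.\<close>

lemma Suc_mult_pred_div:
  fixes n p :: nat
  assumes "0 < p"
  shows "Suc n * (p - 1) div p = n * (p - 1) div p + (if p dvd n then 0 else 1)"
proof -
  define q s where "q = n div p" and "s = n mod p"
  have n: "n = q * p + s" and s: "s < p" and dvd: "p dvd n \<longleftrightarrow> s = 0"
    using assms by (simp_all add: q_def s_def dvd_eq_mod_eq_0)
  show ?thesis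
  proof (cases "s = 0")
    case True
    then have "n * (p - 1) = q * (p - 1) * p + 0" and "Suc n * (p - 1) = q * (p - 1) * p + (p - 1)"
      using n by (simp_all add: algebra_simps)
    then show ?thesis
      using True assms dvd by (simp only: div_mult_self3) simp
  next
    case False
    then obtain s' d where s': "s = Suc s'" and d: "p = s + Suc d"
      using s by (metis add_Suc_right less_imp_Suc_add not0_implies_Suc)
    have "n * (p - 1) = (q * (p - 1) + s') * p + Suc d"
      and "Suc n * (p - 1) = (q * (p - 1) + s) * p + d"
      unfolding n d s' by (simp_all add: algebra_simps)
    moreover have "Suc d < p" "d < p"
      using d s' by simp_all
    ultimately show ?thesis
      using False dvd s' assms by (simp only: div_mult_self3) simp
  qed
qed

lemma ceiling_mult_div_pred_le_iff:
  fixes m n p :: nat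
  assumes "2 \<le> p"
  shows "nat \<lceil>real m * real p / (real p - 1)\<rceil> \<le> n \<longleftrightarrow> m \<le> n * (p - 1) div p"
proof -
  have "nat \<lceil>real m * real p / (real p - 1)\<rceil> \<le> n \<longleftrightarrow> real m * real p / (real p - 1) \<le> real n"
    by (simp add: nat_le_iff ceiling_le_iff)
  also have "\<dots> \<longleftrightarrow> real m * real p \<le> real n * (real p - 1)"
    using assms by (simp add: divide_le_eq)
  also have "\<dots> \<longleftrightarrow> m * p \<le> n * (p - 1)"
  proof -
    have "real (n * (p - 1)) = real n * (real p - 1)"
      using assms by (simp add: of_nat_diff)
    then show ?thesis
      by (metis of_nat_le_iff of_nat_mult)
  qed
  also have "\<dots> \<longleftrightarrow> m \<le> n * (p - 1) div p"
    using assms by (simp add: less_eq_div_iff_mult_less_eq)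
  finally show ?thesis .
qed

text \<open>Clocks \<open>2, 3, \<dots>\<close> renumbered as \<open>1, 2, \<dots>\<close>. The unused entry 0 is set to the seed 1, so that
  the all-one seed is mapped to itself.\<close>
definition higher_clocks :: "(nat \<Rightarrow> nat) \<Rightarrow> (nat \<Rightarrow> nat)" where
  "higher_clocks \<phi> = (\<lambda>i. if i = 0 then 1 else \<phi> (Suc i))"

lemma first_ready_neq_0: "first_ready \<phi> \<noteq> enat 0"
proof -
  have "(LEAST r. 1 \<le> r \<and> \<phi> r = 1) \<noteq> 0" if "\<exists>r\<ge>1. \<phi> r = 1"
    using LeastI_ex[of "\<lambda>r. 1 \<le> r \<and> \<phi> r = 1"] that by force
  then show ?thesis
    unfolding first_ready_def by auto
qed

lemma clock_step_0: "clock_step \<pi> \<phi> 0 = \<phi> 0"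
  using first_ready_neq_0[of \<phi>] by (simp add: clock_step_def zero_enat_def)

lemma first_ready_ready: "\<phi> 1 = 1 \<Longrightarrow> first_ready \<phi> = enat 1"
  unfolding first_ready_def by (auto intro: Least_equality)

lemma first_ready_higher_clocks:
  assumes "\<phi> 1 \<noteq> 1"
  shows "first_ready \<phi> = eSuc (first_ready (higher_clocks \<phi>))"
proof -
  let ?P = "\<lambda>r. 1 \<le> r \<and> \<phi> r = 1" and ?Q = "\<lambda>r. 1 \<le> r \<and> higher_clocks \<phi> r = 1"
  have shift: "\<forall>r. ?P (Suc r) = ?Q r"
    using assms by (auto simp: higher_clocks_def elim: less_SucE)
  have "\<not> ?P 0"
    by simp
  then have ex_iff: "(\<exists>r. ?P r) \<longleftrightarrow> (\<exists>r. ?Q r)"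
    using shift by (metis not0_implies_Suc)
  show ?thesis
  proof (cases "\<exists>r. ?Q r")
    case True
    then obtain r q where "?P r" "?Q q"
      using ex_iff by blast
    then have "Least ?P = Suc (Least ?Q)"
      using shift \<open>\<not> ?P 0\<close> by (intro Least_Suc2)
    then show ?thesis
      using True ex_iff by (simp add: first_ready_def eSuc_enat)
  next
    case False
    then have "\<not> (\<exists>r. ?P r)"
      using ex_iff by blast
    then show ?thesis
      using False unfolding first_ready_def by auto
  qed
qed

lemma one_less_first_ready: "\<phi> 1 \<noteq> 1 \<Longrightarrow> enat 1 < first_ready \<phi>"
  using first_ready_neq_0[of "higher_clocks \<phi>"]
  by (cases "first_ready (higher_clocks \<phi>)") (auto simp: first_ready_higher_clocks eSuc_enat)

lemma clock_step_first_clock: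
  "clock_step \<pi> \<phi> 1 = (if \<phi> 1 = 1 then \<pi> 1 else \<phi> 1 - 1)"
  using first_ready_ready[of \<phi>] one_less_first_ready[of \<phi>] by (auto simp: clock_step_def)

lemma higher_clocks_clock_step_ready:
  "\<phi> 1 = 1 \<Longrightarrow> higher_clocks (clock_step \<pi> \<phi>) = higher_clocks \<phi>"
  using first_ready_ready[of \<phi>] by (auto simp: higher_clocks_def clock_step_def)

lemma higher_clocks_clock_step:
  assumes "\<phi> 1 \<noteq> 1"
  shows "higher_clocks (clock_step \<pi> \<phi>) = clock_step (\<pi> \<circ> Suc) (higher_clocks \<phi>)"
proof
  fix i
  show "higher_clocks (clock_step \<pi> \<phi>) i = clock_step (\<pi> \<circ> Suc) (higher_clocks \<phi>) i"
  proof (cases "i = 0")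
    case True
    then show ?thesis
      by (simp add: higher_clocks_def clock_step_0)
  next
    case False
    have "enat (Suc i) < first_ready \<phi> \<longleftrightarrow> enat i < first_ready (higher_clocks \<phi>)"
      and "enat (Suc i) = first_ready \<phi> \<longleftrightarrow> enat i = first_ready (higher_clocks \<phi>)"
      using first_ready_higher_clocks[of \<phi>, OF assms] by (simp_all add: eSuc_enat[symmetric])
    then show ?thesis
      using False by (simp add: higher_clocks_def clock_step_def)
  qed
qed

lemma clocks_seed1_first_clock:
  assumes "2 \<le> \<pi> 1"
  shows "clocks \<pi> (\<lambda>_. 1) n 1 = (if \<pi> 1 dvd n then 1 else \<pi> 1 + 1 - n mod \<pi> 1)"
proof -
  (* As an atom, \<pi> 1 cannot be turned into \<pi> (Suc 0) by One_nat_def in only some of the terms. *)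
  define p where "p = \<pi> 1"
  have p: "2 \<le> p"
    using assms by (simp add: p_def)
  show ?thesis
    unfolding p_def[symmetric]
  proof (induction n)
    case (Suc n)
    have step: "clocks \<pi> (\<lambda>_. 1) (Suc n) 1
        = (if clocks \<pi> (\<lambda>_. 1) n 1 = 1 then p else clocks \<pi> (\<lambda>_. 1) n 1 - 1)"
      by (simp only: clocks.simps clock_step_first_clock p_def)
    have s: "n mod p < p"
      using p by simp
    consider "p dvd n" | "\<not> p dvd n" "p dvd Suc n" | "\<not> p dvd n" "\<not> p dvd Suc n"
      by blast
    then show ?case
    proof cases
      case 1
      then have "Suc n mod p = 1"
        using p by (simp add: mod_Suc dvd_eq_mod_eq_0)
      then have "\<not> p dvd Suc n"
        using p by (simp add: dvd_eq_mod_eq_0)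
      then show ?thesis
        using 1 Suc.IH \<open>Suc n mod p = 1\<close> unfolding step by simp
    next
      case 2
      then have "Suc (n mod p) = p"
        using mod_Suc[of n p] by (auto simp: dvd_eq_mod_eq_0 split: if_splits)
      moreover have "clocks \<pi> (\<lambda>_. 1) n 1 = p + 1 - n mod p"
        using 2 Suc.IH by simp
      ultimately have "clocks \<pi> (\<lambda>_. 1) n 1 = 2"
        by linarith
      then show ?thesis
        using 2 unfolding step by simp
    next
      case 3
      then have "Suc n mod p = Suc (n mod p)" "0 < n mod p"
        using mod_Suc[of n p] by (auto simp: dvd_eq_mod_eq_0 split: if_splits)
      moreover have "clocks \<pi> (\<lambda>_. 1) n 1 = p + 1 - n mod p"
        using 3 Suc.IH by simp
      ultimately have "clocks \<pi> (\<lambda>_. 1) n 1 \<noteq> 1"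
        and "clocks \<pi> (\<lambda>_. 1) n 1 - 1 = p + 1 - Suc n mod p"
        using s by linarith+
      then show ?thesis
        using 3 unfolding step by simp
    qed
  qed simp
qed

lemma clocks_seed1_first_clock_eq_1_iff:
  assumes "2 \<le> \<pi> 1"
  shows "clocks \<pi> (\<lambda>_. 1) n 1 = 1 \<longleftrightarrow> \<pi> 1 dvd n"
proof (cases "\<pi> 1 dvd n")
  case False
  have "n mod \<pi> 1 < \<pi> 1"
    using assms by simp
  moreover have "clocks \<pi> (\<lambda>_. 1) n 1 = \<pi> 1 + 1 - n mod \<pi> 1"
    using False clocks_seed1_first_clock[of \<pi> n, OF assms] by simp
  ultimately show ?thesis
    using False by linarith
qed (use clocks_seed1_first_clock[of \<pi> n, OF assms] in simp)

lemma higher_clocks_clocks_seed1: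
  assumes "2 \<le> \<pi> 1"
  shows "higher_clocks (clocks \<pi> (\<lambda>_. 1) n)
    = clocks (\<pi> \<circ> Suc) (\<lambda>_. 1) (n * (\<pi> 1 - 1) div \<pi> 1)"
proof (induction n)
  case 0
  then show ?case
    by (simp add: higher_clocks_def fun_eq_iff)
next
  case (Suc n)
  have step: "Suc n * (\<pi> 1 - 1) div \<pi> 1 = n * (\<pi> 1 - 1) div \<pi> 1 + (if \<pi> 1 dvd n then 0 else 1)"
    using assms by (intro Suc_mult_pred_div) simp
  show ?case
  proof (cases "\<pi> 1 dvd n")
    case True
    then show ?thesis
      using Suc.IH step clocks_seed1_first_clock_eq_1_iff[of \<pi> n, OF assms]
      by (simp add: higher_clocks_clock_step_ready)
  next
    case False
    then show ?thesis
      using Suc.IH step clocks_seed1_first_clock_eq_1_iff[of \<pi> n, OF assms]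
      by (simp add: higher_clocks_clock_step comp_def)
  qed
qed

lemma mp_seq_seed1_first_level:
  assumes "2 \<le> \<pi> 1" and "\<pi> 1 dvd t - 1"
  shows "mp_seq \<pi> (\<lambda>_. 1) t = enat 1"
  using assms clocks_seed1_first_clock_eq_1_iff[of \<pi> "t - 1"]
  by (simp add: mp_seq_def first_ready_ready)

lemma mp_seq_seed1_higher_level:
  assumes "2 \<le> \<pi> 1" and "1 \<le> t" and "\<not> \<pi> 1 dvd t - 1"
  shows "mp_seq \<pi> (\<lambda>_. 1) t = eSuc (mp_seq (\<pi> \<circ> Suc) (\<lambda>_. 1) (t * (\<pi> 1 - 1) div \<pi> 1))"
proof -
  have not_ready: "clocks \<pi> (\<lambda>_. 1) (t - 1) 1 \<noteq> 1"
    using assms clocks_seed1_first_clock_eq_1_iff[of \<pi> "t - 1"] by simp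
  have "t * (\<pi> 1 - 1) div \<pi> 1 = (t - 1) * (\<pi> 1 - 1) div \<pi> 1 + 1"
    using assms Suc_mult_pred_div[of "\<pi> 1" "t - 1"] by simp
  then show ?thesis
    using first_ready_higher_clocks[of "clocks \<pi> (\<lambda>_. 1) (t - 1)", OF not_ready]
      higher_clocks_clocks_seed1[of \<pi>, OF assms(1)]
    by (simp add: mp_seq_def)
qed

lemma first_hit_eqI:
  assumes "1 \<le> w" and "k w = enat r" and "\<And>t. 1 \<le> t \<Longrightarrow> t < w \<Longrightarrow> k t \<noteq> enat r"
  shows "first_hit k r = enat w"
  unfolding first_hit_def
proof (rule antisym)
  show "(INF t \<in> {t. 1 \<le> t \<and> k t = enat r}. enat t) \<le> enat w"
    using assms by (intro INF_lower2[of w]) auto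
  show "enat w \<le> (INF t \<in> {t. 1 \<le> t \<and> k t = enat r}. enat t)"
    using assms by (intro INF_greatest) (auto simp: not_less[symmetric])
qed

lemma first_hit_eq_enat_iff:
  "first_hit k r = enat w \<longleftrightarrow> 1 \<le> w \<and> k w = enat r \<and> (\<forall>t. 1 \<le> t \<and> t < w \<longrightarrow> k t \<noteq> enat r)"
  (is "_ \<longleftrightarrow> ?first w")
proof
  assume hit: "first_hit k r = enat w"
  let ?S = "{t. 1 \<le> t \<and> k t = enat r}"
  have "?S \<noteq> {}"
  proof
    assume "?S = {}"
    then have "first_hit k r = \<infinity>"
      unfolding first_hit_def by (simp only: image_empty Inf_empty top_enat_def)
    with hit show False
      by simp
  qed
  then obtain t0 where "t0 \<in> ?S"
    by blast
  define w0 where "w0 = (LEAST t. t \<in> ?S)"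
  have "w0 \<in> ?S"
    unfolding w0_def using \<open>t0 \<in> ?S\<close> by (rule LeastI)
  moreover have "t \<notin> ?S" if "t < w0" for t
    using that unfolding w0_def by (rule not_less_Least)
  ultimately have "?first w0"
    by auto
  moreover from this have "first_hit k r = enat w0"
    by (intro first_hit_eqI) auto
  ultimately show "?first w"
    using hit by simp
qed (auto intro: first_hit_eqI)

lemma u_aux_Suc_shift: "j < r \<Longrightarrow> u_aux \<pi> (Suc r) j = u_aux (\<pi> \<circ> Suc) r j"
proof (induction j)
  case (Suc j)
  then have "Suc (r - 1 - j) = r - j"
    by simp
  then show ?case
    using Suc by simp
qed simp

lemma u_chain_Suc:
  assumes "1 \<le> r"
  shows "u_chain \<pi> (Suc r) = nat \<lceil>real (u_chain (\<pi> \<circ> Suc) r) * real (\<pi> 1) / (real (\<pi> 1) - 1)\<rceil>"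
proof -
  obtain j where r: "r = Suc j"
    using assms by (cases r) auto
  then show ?thesis
    using u_aux_Suc_shift[of j r \<pi>] by (simp add: u_chain_def)
qed

lemma first_hit_mp_seq_seed1_Suc:
  assumes p: "2 \<le> \<pi> 1" and r: "1 \<le> r"
    and hit_shifted: "first_hit (mp_seq (\<pi> \<circ> Suc) (\<lambda>_. 1)) r = enat m"
  shows "first_hit (mp_seq \<pi> (\<lambda>_. 1)) (Suc r)
    = enat (nat \<lceil>real m * real (\<pi> 1) / (real (\<pi> 1) - 1)\<rceil>)"
proof -
  let ?k = "mp_seq \<pi> (\<lambda>_. 1)" and ?k' = "mp_seq (\<pi> \<circ> Suc) (\<lambda>_. 1)"
  define c where "c t = t * (\<pi> 1 - 1) div \<pi> 1" for t
  define N where "N = nat \<lceil>real m * real (\<pi> 1) / (real (\<pi> 1) - 1)\<rceil>"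
  from hit_shifted have m: "1 \<le> m" "?k' m = enat r"
      "\<And>t. 1 \<le> t \<Longrightarrow> t < m \<Longrightarrow> ?k' t \<noteq> enat r"
    by (auto simp: first_hit_eq_enat_iff)
  have N_le_iff: "N \<le> t \<longleftrightarrow> m \<le> c t" for t
    unfolding N_def c_def using p by (rule ceiling_mult_div_pred_le_iff)
  have c_Suc: "c (Suc t) = c t + (if \<pi> 1 dvd t then 0 else 1)" for t
    unfolding c_def using p by (intro Suc_mult_pred_div) simp
  have N: "1 \<le> N"
    using N_le_iff[of 0] m(1) by (simp add: c_def)
  have "c (N - 1) < m" "m \<le> c N"
    using N_le_iff[of "N - 1"] N_le_iff[of N] N by auto
  then have N_not_first: "\<not> \<pi> 1 dvd N - 1" and c_N: "c N = m"
    using c_Suc[of "N - 1"] N by (auto split: if_splits)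
  have "?k N = enat (Suc r)"
    using mp_seq_seed1_higher_level[of \<pi> N, OF p N N_not_first] c_N m(2)
    by (simp add: c_def eSuc_enat)
  moreover have "?k t \<noteq> enat (Suc r)" if t: "1 \<le> t" "t < N" for t
  proof (cases "\<pi> 1 dvd t - 1")
    case True
    then show ?thesis
      using mp_seq_seed1_first_level[of \<pi> t, OF p True] r by simp
  next
    case False
    have "1 \<le> c t" "c t < m"
      using c_Suc[of "t - 1"] False t N_le_iff[of t] by auto
    then have "?k' (c t) \<noteq> enat r"
      using m(3) by blast
    then show ?thesis
      using mp_seq_seed1_higher_level[of \<pi> t, OF p t(1) False]
      by (simp add: c_def eSuc_enat[symmetric])
  qed
  ultimately show ?thesis
    unfolding N_def[symmetric] using N by (intro first_hit_eqI)
qed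

lemma first_hit_mp_seq_seed1:
  "1 \<le> r \<Longrightarrow> (\<And>i. 1 \<le> i \<Longrightarrow> i < r \<Longrightarrow> 2 \<le> \<pi> i) \<Longrightarrow>
    first_hit (mp_seq \<pi> (\<lambda>_. 1)) r = enat (u_chain \<pi> r)"
proof (induction r arbitrary: \<pi>)
  case (Suc r)
  show ?case
  proof (cases "r = 0")
    case True
    have "mp_seq \<pi> (\<lambda>_. 1) 1 = enat 1"
      by (simp add: mp_seq_def first_ready_ready)
    then show ?thesis
      using True by (auto intro: first_hit_eqI simp: u_chain_def)
  next
    case False
    then have "first_hit (mp_seq (\<pi> \<circ> Suc) (\<lambda>_. 1)) r = enat (u_chain (\<pi> \<circ> Suc) r)"
      using Suc.prems(2) by (intro Suc.IH) auto
    then show ?thesis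
      using False Suc.prems(2)[of 1] first_hit_mp_seq_seed1_Suc u_chain_Suc by simp
  qed
qed simp

theorem theorem2:
  fixes \<pi> :: "nat \<Rightarrow> nat" and r :: nat
  assumes periods: "\<forall>i\<ge>1. 1 \<le> \<pi> i"
    and r_pos: "1 \<le> r"
    and big: "\<forall>i. 1 \<le> i \<and> i \<le> r - 1 \<longrightarrow> 2 \<le> \<pi> i"
  shows "first_hit (mp_seq \<pi> (\<lambda>_. 1)) r = enat (u_chain \<pi> r)"
proof (rule first_hit_mp_seq_seed1[OF r_pos])
  fix i
  assume "1 \<le> i" and "i < r"
  then show "2 \<le> \<pi> i"
    using big by simp
qed

end
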